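(* Let $\rho:\mathcal{X}\to\mathbb{R}$ be a monetary risk measure and let $P\in\mathcal{M}_1$. Then $\rho^P$ is a monetary risk measure on $L^\infty(P)$, where its defining properties are understood $P$-almost surely: (i) if $X\ge 0$ $P$-a.s. then $\rho^P(X)\le 0$; (ii) if $X\ge Y$ $P$-a.s. then $\rho^P(X)\le\rho^P(Y)$; (iii) $\rho^P(X+a)=\rho^P(X)-a$ for all $a\in\mathbb{R}$, for all $X,Y\in L^\infty(P)$. If moreover $\rho$ is a convex risk measure, then $\rho^P$ is convex, i.e. $\rho^P(\lambda X+(1-\lambda)Y)\le\lambda\rho^P(X)+(1-\lambda)\rho^P(Y)$ for all $X,Y\in L^\infty(P)$ and $\lambda\in(0,1)$.
   Context: $(\Omega,\mathcal{F})$ is a measurable space, $\mathcal{M}_1$ the set of probability measures on it, and $\mathcal{X}$ the space of all $\mathcal{F}$-measurable $X:\Omega\to\mathbb{R}$ with $\sup_{\omega}|X(\omega)|<\infty$. A monetary risk measure is a map $\rho:\mathcal{X}\to\mathbb{R}$ such that, pointwise for all $\omega$: $X\ge0\Rightarrow\rho(X)\le0$; $X\ge Y\Rightarrow\rho(X)\le\rho(Y)$; $\rho(X+a)=\rho(X)-a$ for all $a\in\mathbb{R}$. It is a convex risk measure if in addition $\rho(\lambda X+(1-\lambda)Y)\le\lambda\rho(X)+(1-\lambda)\rho(Y)$ for all $X,Y\in\mathcal{X}$, $\lambda\in(0,1)$. For $P\in\mathcal{M}_1$ and $X\in L^\infty(P)=L^\infty(\Omega,\mathcal{F},P)$ define $\rho^P(X)=\inf\{\rho(\widetilde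 X):\widetilde X\in\mathcal{X},\ P(\widetilde X=X)=1\}$.
   Formalization: $\rho^P$ is an infimum taken in the extended reals, possibly -infinity, so it is not asserted to map into $\mathbb{R}$, and (i)-(iii) and convexity are statements about extended reals. The statement above fails without it. *)

theory Defs
  imports "HOL-Probability.Probability"
begin

definition bdd_meas :: "'a measure \<Rightarrow> ('a \<Rightarrow> real) set" where
  "bdd_meas M = {X. X \<in> borel_measurable M \<and> (\<exists>C. \<forall>\<omega>\<in>space M. \<bar>X \<omega>\<bar> \<le> C)}"

definition monetary_rm :: "'a measure \<Rightarrow> (('a \<Rightarrow> real) \<Rightarrow> real) \<Rightarrow> bool" where
  "monetary_rm M \<rho> \<longleftrightarrow>
     (\<forall>X\<in>bdd_meas M. (\<forall>\<omega>\<in>space M. 0 \<le> X \<omega>) \<longrightarrow> \<rho> X \<le> 0) \<and>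
     (\<forall>X\<in>bdd_meas M. \<forall>Y\<in>bdd_meas M. (\<forall>\<omega>\<in>space M. Y \<omega> \<le> X \<omega>) \<longrightarrow> \<rho> X \<le> \<rho> Y) \<and>
     (\<forall>X\<in>bdd_meas M. \<forall>a::real. \<rho> (\<lambda>\<omega>. X \<omega> + a) = \<rho> X - a)"

definition convex_rm :: "'a measure \<Rightarrow> (('a \<Rightarrow> real) \<Rightarrow> real) \<Rightarrow> bool" where
  "convex_rm M \<rho> \<longleftrightarrow> monetary_rm M \<rho> \<and>
     (\<forall>X\<in>bdd_meas M. \<forall>Y\<in>bdd_meas M. \<forall>l::real. 0 < l \<and> l < 1 \<longrightarrow>
        \<rho> (\<lambda>\<omega>. l * X \<omega> + (1 - l) * Y \<omega>) \<le> l * \<rho> X + (1 - l) * \<rho> Y)"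

text \<open>Representatives of elements of L-infinity(P): measurable, P-essentially bounded.\<close>
definition Linf :: "'a measure \<Rightarrow> ('a \<Rightarrow> real) set" where
  "Linf P = {X. X \<in> borel_measurable P \<and> (\<exists>C. AE \<omega> in P. \<bar>X \<omega>\<bar> \<le> C)}"

text \<open>rho^P(X) = inf { rho(X') : X' bounded measurable, X' = X P-a.s. }, taken in the
  extended reals (the infimum may be -infinity).\<close>
definition rhoP :: "'a measure \<Rightarrow> (('a \<Rightarrow> real) \<Rightarrow> real) \<Rightarrow> 'a measure \<Rightarrow> ('a \<Rightarrow> real) \<Rightarrow> ereal" where
  "rhoP M \<rho> P X = (INF X'\<in>{X'\<in>bdd_meas M. AE \<omega> in P. X' \<omega> = X \<omega>}. ereal (\<rho> X'))"

end

theory Submission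
  imports Defs
begin

text \<open>Maxima, shifts by constants and linear combinations of bounded measurable versions are
  again versions of the corresponding combinations, and on versions the axioms of \<open>\<rho>\<close> hold
  pointwise; taking infima over all versions transports each axiom to \<open>\<rho>\<^sup>P\<close>. Versions exist
  because an essentially bounded function agrees almost surely with its truncation at the
  essential bound. Since \<open>\<rho>\<^sup>P\<close> may be \<open>-\<infinity>\<close>, convexity is obtained by passing to the infimum
  in \<open>l \<rho>(X') + m \<rho>(Y')\<close> one variable at a time.\<close>

lemma ereal_le_cmult_INF_add:
  fixes f :: "'b \<Rightarrow> real" and z w :: ereal
  assumes "A \<noteq> {}" and "0 < c" and le: "\<And>x. x \<in> A \<Longrightarrow> z \<le> ereal c * ereal (f x) + w"
  shows "z \<le> ereal c * (INF x\<in>A. ereal (f x)) + w"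
proof -
  from \<open>A \<noteq> {}\<close> obtain x0 where "x0 \<in> A" by blast
  show ?thesis
  proof (cases w)
    case PInf
    then show ?thesis by simp
  next
    case MInf
    with le[OF \<open>x0 \<in> A\<close>] show ?thesis by simp
  next
    case (real r)
    show ?thesis
    proof (cases z)
      case (real s)
      have "ereal ((s - r) / c) \<le> (INF x\<in>A. ereal (f x))"
      proof (rule INF_greatest)
        fix x assume "x \<in> A"
        with le \<open>z = ereal s\<close> \<open>w = ereal r\<close> have "s \<le> c * f x + r" by simp
        then show "ereal ((s - r) / c) \<le> ereal (f x)"
          using \<open>0 < c\<close> by (simp add: field_simps)
      qed
      then have "ereal c * ereal ((s - r) / c) \<le> ereal c * (INF x\<in>A. ereal (f x))"
        using \<open>0 < c\<close> by (intro ereal_mult_left_mono) auto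
      then have "ereal (s - r) + w \<le> ereal c * (INF x\<in>A. ereal (f x)) + w"
        using \<open>0 < c\<close> by (intro add_right_mono) simp
      then show ?thesis
        using \<open>z = ereal s\<close> \<open>w = ereal r\<close> by simp
    next
      case PInf
      with le[OF \<open>x0 \<in> A\<close>] \<open>w = ereal r\<close> show ?thesis by simp
    qed simp
  qed
qed

lemma ereal_le_cmult_INF_add_cmult_INF:
  fixes f g :: "'b \<Rightarrow> real" and z :: ereal
  assumes "A \<noteq> {}" and "B \<noteq> {}" and "0 < l" and "0 < m"
    and le: "\<And>x y. x \<in> A \<Longrightarrow> y \<in> B \<Longrightarrow> z \<le> ereal (l * f x + m * g y)"
  shows "z \<le> ereal l * (INF x\<in>A. ereal (f x)) + ereal m * (INF y\<in>B. ereal (g y))"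
proof -
  have "z \<le> ereal l * (INF x\<in>A. ereal (f x)) + ereal m * ereal (g y)" if "y \<in> B" for y
    using \<open>A \<noteq> {}\<close> \<open>0 < l\<close> by (rule ereal_le_cmult_INF_add) (simp add: le \<open>y \<in> B\<close>)
  then have "z \<le> ereal m * (INF y\<in>B. ereal (g y)) + ereal l * (INF x\<in>A. ereal (f x))"
    using \<open>B \<noteq> {}\<close> \<open>0 < m\<close> by (intro ereal_le_cmult_INF_add) (simp_all add: add.commute)
  then show ?thesis
    by (simp add: add.commute)
qed

lemma ereal_minus_INF:
  fixes f :: "'b \<Rightarrow> ereal"
  shows "(INF x\<in>A. f x) - ereal a = (INF x\<in>A. f x - ereal a)"
proof -
  have "t - ereal a + ereal a = t" "t + ereal a - ereal a = t" for t :: ereal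
    by (cases t; simp)+
  then have "bij (\<lambda>t::ereal. t - ereal a)"
    by (intro bij_betw_byWitness[of _ "\<lambda>t. t + ereal a"]) auto
  moreover have "mono (\<lambda>t::ereal. t - ereal a)"
    by (simp add: mono_def ereal_minus_mono)
  ultimately have "(\<lambda>t. t - ereal a) (Inf (f ` A)) = Inf ((\<lambda>t. t - ereal a) ` f ` A)"
    by (rule mono_bij_Inf[rotated])
  then show ?thesis
    by (simp add: image_comp)
qed

lemma bdd_measI:
  assumes "X \<in> borel_measurable M" and "\<And>\<omega>. \<omega> \<in> space M \<Longrightarrow> \<bar>X \<omega>\<bar> \<le> C"
  shows "X \<in> bdd_meas M"
  using assms unfolding bdd_meas_def by blast

lemma bdd_measE:
  assumes "X \<in> bdd_meas M"
  obtains C where "X \<in> borel_measurable M" and "\<And>\<omega>. \<omega> \<in> space M \<Longrightarrow> \<bar>X \<omega>\<bar> \<le> C"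
  using assms unfolding bdd_meas_def by blast

lemma bdd_meas_const: "(\<lambda>_. c) \<in> bdd_meas M"
  by (rule bdd_measI[where C = "\<bar>c\<bar>"]) auto

lemma bdd_meas_add:
  assumes "X \<in> bdd_meas M" and "Y \<in> bdd_meas M"
  shows "(\<lambda>\<omega>. X \<omega> + Y \<omega>) \<in> bdd_meas M"
proof -
  obtain C where "X \<in> borel_measurable M" "\<And>\<omega>. \<omega> \<in> space M \<Longrightarrow> \<bar>X \<omega>\<bar> \<le> C"
    using assms(1) by (elim bdd_measE) blast
  moreover obtain D where "Y \<in> borel_measurable M" "\<And>\<omega>. \<omega> \<in> space M \<Longrightarrow> \<bar>Y \<omega>\<bar> \<le> D"
    using assms(2) by (elim bdd_measE) blast
  ultimately show ?thesis
    by (intro bdd_measI[where C = "C + D"]) (auto intro: abs_triangle_ineq[THEN order_trans] add_mono)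
qed

lemma bdd_meas_cmult:
  assumes "X \<in> bdd_meas M"
  shows "(\<lambda>\<omega>. c * X \<omega>) \<in> bdd_meas M"
proof -
  obtain C where "X \<in> borel_measurable M" "\<And>\<omega>. \<omega> \<in> space M \<Longrightarrow> \<bar>X \<omega>\<bar> \<le> C"
    using assms by (elim bdd_measE) blast
  then show ?thesis
    by (intro bdd_measI[where C = "\<bar>c\<bar> * C"]) (auto simp: abs_mult intro: mult_left_mono)
qed

lemma bdd_meas_max:
  assumes "X \<in> bdd_meas M" and "Y \<in> bdd_meas M"
  shows "(\<lambda>\<omega>. max (X \<omega>) (Y \<omega>)) \<in> bdd_meas M"
proof -
  obtain C where X: "X \<in> borel_measurable M" "\<And>\<omega>. \<omega> \<in> space M \<Longrightarrow> \<bar>X \<omega>\<bar> \<le> C"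
    using assms(1) by (elim bdd_measE) blast
  obtain D where Y: "Y \<in> borel_measurable M" "\<And>\<omega>. \<omega> \<in> space M \<Longrightarrow> \<bar>Y \<omega>\<bar> \<le> D"
    using assms(2) by (elim bdd_measE) blast
  show ?thesis
  proof (rule bdd_measI[where C = "max C D"])
    show "(\<lambda>\<omega>. max (X \<omega>) (Y \<omega>)) \<in> borel_measurable M"
      using X(1) Y(1) by measurable
    fix \<omega> assume "\<omega> \<in> space M"
    with X(2) Y(2) show "\<bar>max (X \<omega>) (Y \<omega>)\<bar> \<le> max C D"
      by (fastforce simp: abs_le_iff max_def)
  qed
qed

lemma bdd_meas_truncate:
  assumes "X \<in> borel_measurable M"
  shows "(\<lambda>\<omega>. max (- C) (min C (X \<omega>))) \<in> bdd_meas M"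
  using assms by (intro bdd_measI[where C = "\<bar>C\<bar>"]) auto

definition bounded_versions :: "'a measure \<Rightarrow> 'a measure \<Rightarrow> ('a \<Rightarrow> real) \<Rightarrow> ('a \<Rightarrow> real) set" where
  "bounded_versions M P X = {X' \<in> bdd_meas M. AE \<omega> in P. X' \<omega> = X \<omega>}"

lemma bounded_versions_iff:
  "X' \<in> bounded_versions M P X \<longleftrightarrow> X' \<in> bdd_meas M \<and> (AE \<omega> in P. X' \<omega> = X \<omega>)"
  unfolding bounded_versions_def by simp

lemma bounded_versions_nonempty:
  assumes "sets P = sets M" and "X \<in> Linf P"
  shows "bounded_versions M P X \<noteq> {}"
proof -
  from \<open>X \<in> Linf P\<close> obtain C where "X \<in> borel_measurable P" and bound: "AE \<omega> in P. \<bar>X \<omega>\<bar> \<le> C"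
    unfolding Linf_def by blast
  then have "X \<in> borel_measurable M"
    using measurable_cong_sets[OF \<open>sets P = sets M\<close> refl] by blast
  moreover from bound have "AE \<omega> in P. max (- C) (min C (X \<omega>)) = X \<omega>"
    by eventually_elim auto
  ultimately have "(\<lambda>\<omega>. max (- C) (min C (X \<omega>))) \<in> bounded_versions M P X"
    by (simp add: bounded_versions_iff bdd_meas_truncate)
  then show ?thesis
    by blast
qed

lemma const_in_bounded_versions: "(\<lambda>_. c) \<in> bounded_versions M P (\<lambda>_. c)"
  by (simp add: bounded_versions_iff bdd_meas_const)

lemma bounded_versions_add_const:
  "bounded_versions M P (\<lambda>\<omega>. X \<omega> + a) = (\<lambda>X' \<omega>. X' \<omega> + a) ` bounded_versions M P X"
proof (intro equalityI subsetI)
  fix Z assume Z: "Z \<in> bounded_versions M P (\<lambda>\<omega>. X \<omega> + a)"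
  then have "(\<lambda>\<omega>. Z \<omega> + - a) \<in> bdd_meas M"
    by (intro bdd_meas_add bdd_meas_const) (simp add: bounded_versions_iff)
  with Z have "(\<lambda>\<omega>. Z \<omega> + - a) \<in> bounded_versions M P X"
    by (auto simp: bounded_versions_iff elim: AE_mp)
  then show "Z \<in> (\<lambda>X' \<omega>. X' \<omega> + a) ` bounded_versions M P X"
    by (rule rev_image_eqI) simp
qed (auto simp: bounded_versions_iff bdd_meas_add bdd_meas_const elim: AE_mp)

lemma bounded_versions_lincomb:
  assumes "X' \<in> bounded_versions M P X" and "Y' \<in> bounded_versions M P Y"
  shows "(\<lambda>\<omega>. l * X' \<omega> + m * Y' \<omega>) \<in> bounded_versions M P (\<lambda>\<omega>. l * X \<omega> + m * Y \<omega>)"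
proof -
  from assms have "AE \<omega> in P. X' \<omega> = X \<omega>" "AE \<omega> in P. Y' \<omega> = Y \<omega>"
    by (simp_all add: bounded_versions_iff)
  then have "AE \<omega> in P. l * X' \<omega> + m * Y' \<omega> = l * X \<omega> + m * Y \<omega>"
    by eventually_elim simp
  with assms show ?thesis
    by (simp add: bounded_versions_iff bdd_meas_add bdd_meas_cmult)
qed

lemma bounded_versions_max:
  assumes "X' \<in> bounded_versions M P X" and "Y' \<in> bounded_versions M P Y"
    and "AE \<omega> in P. Y \<omega> \<le> X \<omega>"
  shows "(\<lambda>\<omega>. max (Y' \<omega>) (X' \<omega>)) \<in> bounded_versions M P X"
proof -
  from assms(1,2) have "AE \<omega> in P. X' \<omega> = X \<omega>" "AE \<omega> in P. Y' \<omega> = Y \<omega>"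
    by (simp_all add: bounded_versions_iff)
  with assms(3) have "AE \<omega> in P. max (Y' \<omega>) (X' \<omega>) = X \<omega>"
    by eventually_elim simp
  with assms(1,2) show ?thesis
    by (simp add: bounded_versions_iff bdd_meas_max)
qed

lemma rhoP_eq_INF_bounded_versions:
  "rhoP M \<rho> P X = (INF X'\<in>bounded_versions M P X. ereal (\<rho> X'))"
  unfolding rhoP_def bounded_versions_def ..

lemma rhoP_le_bounded_version:
  assumes "X' \<in> bounded_versions M P X"
  shows "rhoP M \<rho> P X \<le> ereal (\<rho> X')"
  unfolding rhoP_eq_INF_bounded_versions using assms by (rule INF_lower)

lemma rhoP_mono:
  assumes "monetary_rm M \<rho>" and "sets P = sets M" and "X \<in> Linf P"
    and "AE \<omega> in P. Y \<omega> \<le> X \<omega>"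
  shows "rhoP M \<rho> P X \<le> rhoP M \<rho> P Y"
proof -
  from bounded_versions_nonempty[OF \<open>sets P = sets M\<close> \<open>X \<in> Linf P\<close>]
  obtain X' where X': "X' \<in> bounded_versions M P X" by blast
  show ?thesis
    unfolding rhoP_eq_INF_bounded_versions[of M \<rho> P Y]
  proof (rule INF_greatest)
    fix Y' assume Y': "Y' \<in> bounded_versions M P Y"
    let ?Z = "\<lambda>\<omega>. max (Y' \<omega>) (X' \<omega>)"
    have Z: "?Z \<in> bounded_versions M P X"
      using X' Y' \<open>AE \<omega> in P. Y \<omega> \<le> X \<omega>\<close> by (rule bounded_versions_max)
    then have "rhoP M \<rho> P X \<le> ereal (\<rho> ?Z)"
      by (rule rhoP_le_bounded_version)
    also have "\<rho> ?Z \<le> \<rho> Y'"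
      using \<open>monetary_rm M \<rho>\<close> Z Y' by (auto simp: monetary_rm_def bounded_versions_iff)
    finally show "rhoP M \<rho> P X \<le> ereal (\<rho> Y')"
      by simp
  qed
qed

lemma rhoP_nonpos:
  assumes "monetary_rm M \<rho>" and "sets P = sets M" and "X \<in> Linf P"
    and "AE \<omega> in P. 0 \<le> X \<omega>"
  shows "rhoP M \<rho> P X \<le> 0"
proof -
  have "rhoP M \<rho> P X \<le> rhoP M \<rho> P (\<lambda>_. 0)"
    using assms by (rule rhoP_mono)
  also have "\<dots> \<le> ereal (\<rho> (\<lambda>_. 0))"
    by (rule rhoP_le_bounded_version[OF const_in_bounded_versions])
  also have "\<rho> (\<lambda>_. 0) \<le> 0"
    using \<open>monetary_rm M \<rho>\<close> bdd_meas_const[of 0 M] by (simp add: monetary_rm_def)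
  finally show ?thesis
    by (simp add: zero_ereal_def)
qed

lemma rhoP_add_const:
  assumes "monetary_rm M \<rho>"
  shows "rhoP M \<rho> P (\<lambda>\<omega>. X \<omega> + a) = rhoP M \<rho> P X - ereal a"
proof -
  have cash: "\<rho> (\<lambda>\<omega>. X' \<omega> + a) = \<rho> X' - a" if "X' \<in> bounded_versions M P X" for X'
    using assms that by (simp add: monetary_rm_def bounded_versions_iff)
  have "rhoP M \<rho> P (\<lambda>\<omega>. X \<omega> + a) = (INF X'\<in>bounded_versions M P X. ereal (\<rho> (\<lambda>\<omega>. X' \<omega> + a)))"
    unfolding rhoP_eq_INF_bounded_versions bounded_versions_add_const by (simp add: image_comp)
  also have "\<dots> = (INF X'\<in>bounded_versions M P X. ereal (\<rho> X') - ereal a)"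
    by (intro INF_cong) (simp_all add: cash)
  also have "\<dots> = rhoP M \<rho> P X - ereal a"
    unfolding rhoP_eq_INF_bounded_versions by (rule ereal_minus_INF[symmetric])
  finally show ?thesis .
qed

lemma rhoP_convex:
  assumes "convex_rm M \<rho>" and "sets P = sets M" and "X \<in> Linf P" and "Y \<in> Linf P"
    and "0 < l" and "l < 1"
  shows "rhoP M \<rho> P (\<lambda>\<omega>. l * X \<omega> + (1 - l) * Y \<omega>)
    \<le> ereal l * rhoP M \<rho> P X + ereal (1 - l) * rhoP M \<rho> P Y"
  unfolding rhoP_eq_INF_bounded_versions[of M \<rho> P X] rhoP_eq_INF_bounded_versions[of M \<rho> P Y]
proof (rule ereal_le_cmult_INF_add_cmult_INF)
  show "bounded_versions M P X \<noteq> {}" "bounded_versions M P Y \<noteq> {}"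
    using assms(2-4) by (simp_all add: bounded_versions_nonempty)
  show "0 < l" "0 < 1 - l"
    using assms(5,6) by simp_all
  fix X' Y' assume X': "X' \<in> bounded_versions M P X" and Y': "Y' \<in> bounded_versions M P Y"
  let ?Z = "\<lambda>\<omega>. l * X' \<omega> + (1 - l) * Y' \<omega>"
  have "rhoP M \<rho> P (\<lambda>\<omega>. l * X \<omega> + (1 - l) * Y \<omega>) \<le> ereal (\<rho> ?Z)"
    using bounded_versions_lincomb[OF X' Y'] by (rule rhoP_le_bounded_version)
  also have "\<rho> ?Z \<le> l * \<rho> X' + (1 - l) * \<rho> Y'"
    using assms(1,5,6) X' Y' by (simp add: convex_rm_def bounded_versions_iff)
  finally show "rhoP M \<rho> P (\<lambda>\<omega>. l * X \<omega> + (1 - l) * Y \<omega>) \<le> ereal (l * \<rho> X' + (1 - l) * \<rho> Y')"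
    by simp
qed

theorem lemma3p3:
  fixes M P :: "'a measure" and \<rho> :: "('a \<Rightarrow> real) \<Rightarrow> real"
  assumes "monetary_rm M \<rho>" and "prob_space P" and "sets P = sets M"
  shows "(\<forall>X\<in>Linf P. (AE \<omega> in P. 0 \<le> X \<omega>) \<longrightarrow> rhoP M \<rho> P X \<le> 0) \<and>
    (\<forall>X\<in>Linf P. \<forall>Y\<in>Linf P. (AE \<omega> in P. Y \<omega> \<le> X \<omega>) \<longrightarrow> rhoP M \<rho> P X \<le> rhoP M \<rho> P Y) \<and>
    (\<forall>X\<in>Linf P. \<forall>a::real. rhoP M \<rho> P (\<lambda>\<omega>. X \<omega> + a) = rhoP M \<rho> P X - ereal a) \<and>
    (convex_rm M \<rho> \<longrightarrow>
      (\<forall>X\<in>Linf P. \<forall>Y\<in>Linf P. \<forall>l::real. 0 < l \<and> l < 1 \<longrightarrow>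
        rhoP M \<rho> P (\<lambda>\<omega>. l * X \<omega> + (1 - l) * Y \<omega>)
          \<le> ereal l * rhoP M \<rho> P X + ereal (1 - l) * rhoP M \<rho> P Y))"
  using rhoP_nonpos[OF assms(1,3)] rhoP_mono[OF assms(1,3)] rhoP_add_const[OF assms(1)]
    rhoP_convex[OF _ assms(3)]
  by blast

end
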